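(* Let $S$ be a Boolean inverse monoid satisfying condition (H). Then for all $s,t\in S$, $s^*e_{st}s=e_{ts}$.
   Context: An inverse semigroup is a semigroup $S$ in which every $s$ has a unique $s^*$ with $ss^*s=s$, $s^*ss^*=s^*$; assumed countable with a zero. $E(S)$ is its set of idempotents. A Boolean inverse monoid is an inverse monoid in which every finite compatible set (pairwise $s^*t,st^*\in E(S)$) has a join, multiplication distributes over such joins, and $E(S)$ is a Boolean algebra. For $Z\subseteq W\subseteq E(S)$, $Z$ is a cover of $W$ if every nonzero $w\in W$ has some $z\in Z$ with $zw\ne0$. For $s\in S$ let $\mathcal J_s=\{e\in E(S): se=e\}$. Condition (H): each $\mathcal J_s$ admits a finite cover $C\subseteq\mathcal J_s$. Under (H), $e_s$ denotes $\bigvee_{c\in C}c$ for a finite cover $C$ of $\mathcal J_s$; this is independent of $C$, and $\mathcal J_s=\{e: e\le e_s\}$. *)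

theory Defs
  imports Main "HOL-Library.Countable_Set"
begin

text \<open>The semigroup S is the whole type 'a, with multiplication mult and zero z.\<close>

definition inverse_semigroup :: "('a \<Rightarrow> 'a \<Rightarrow> 'a) \<Rightarrow> 'a \<Rightarrow> bool" where
  "inverse_semigroup mult z \<longleftrightarrow>
     (\<forall>a b c. mult (mult a b) c = mult a (mult b c)) \<and>
     (\<forall>s. \<exists>!t. mult (mult s t) s = s \<and> mult (mult t s) t = t) \<and>
     (\<forall>s. mult z s = z \<and> mult s z = z)"

definition istar :: "('a \<Rightarrow> 'a \<Rightarrow> 'a) \<Rightarrow> 'a \<Rightarrow> 'a" where
  "istar mult s = (THE t. mult (mult s t) s = s \<and> mult (mult t s) t = t)"

definition idem :: "('a \<Rightarrow> 'a \<Rightarrow> 'a) \<Rightarrow> 'a set" where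
  "idem mult = {e. mult e e = e}"

definition nleq :: "('a \<Rightarrow> 'a \<Rightarrow> 'a) \<Rightarrow> 'a \<Rightarrow> 'a \<Rightarrow> bool" where
  "nleq mult s t \<longleftrightarrow> s = mult t (mult (istar mult s) s)"

definition is_join_in :: "('a \<Rightarrow> 'a \<Rightarrow> 'a) \<Rightarrow> 'a set \<Rightarrow> 'a set \<Rightarrow> 'a \<Rightarrow> bool" where
  "is_join_in mult X A j \<longleftrightarrow> j \<in> X \<and> (\<forall>a\<in>A. nleq mult a j) \<and>
     (\<forall>u\<in>X. (\<forall>a\<in>A. nleq mult a u) \<longrightarrow> nleq mult j u)"

abbreviation is_join :: "('a \<Rightarrow> 'a \<Rightarrow> 'a) \<Rightarrow> 'a set \<Rightarrow> 'a \<Rightarrow> bool" where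
  "is_join mult A j \<equiv> is_join_in mult UNIV A j"

definition compatible_set :: "('a \<Rightarrow> 'a \<Rightarrow> 'a) \<Rightarrow> 'a set \<Rightarrow> bool" where
  "compatible_set mult A \<longleftrightarrow> (\<forall>s\<in>A. \<forall>t\<in>A.
     mult (istar mult s) t \<in> idem mult \<and> mult s (istar mult t) \<in> idem mult)"

definition idem_boolean_algebra :: "('a \<Rightarrow> 'a \<Rightarrow> 'a) \<Rightarrow> 'a \<Rightarrow> 'a \<Rightarrow> bool" where
  "idem_boolean_algebra mult z one \<longleftrightarrow>
     (let E = idem mult;
          join = (\<lambda>e f. THE j. is_join_in mult E {e, f} j);
          meet = (\<lambda>e f. THE m. m \<in> E \<and> nleq mult m e \<and> nleq mult m f \<and>
                      (\<forall>u\<in>E. nleq mult u e \<and> nleq mult u f \<longrightarrow> nleq mult u m))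
      in (\<forall>e\<in>E. \<forall>f\<in>E. (\<exists>j. is_join_in mult E {e, f} j)) \<and>
         (\<forall>e\<in>E. \<forall>f\<in>E. (\<exists>m. m \<in> E \<and> nleq mult m e \<and> nleq mult m f \<and>
                      (\<forall>u\<in>E. nleq mult u e \<and> nleq mult u f \<longrightarrow> nleq mult u m))) \<and>
         (\<forall>e\<in>E. \<forall>f\<in>E. \<forall>g\<in>E. meet e (join f g) = join (meet e f) (meet e g)) \<and>
         (\<forall>e\<in>E. \<exists>f\<in>E. meet e f = z \<and> join e f = one))"

definition boolean_inverse_monoid :: "('a \<Rightarrow> 'a \<Rightarrow> 'a) \<Rightarrow> 'a \<Rightarrow> 'a \<Rightarrow> bool" where
  "boolean_inverse_monoid mult z one \<longleftrightarrow>
     inverse_semigroup mult z \<and>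
     (\<forall>s. mult one s = s \<and> mult s one = s) \<and>
     (\<forall>A. finite A \<and> compatible_set mult A \<longrightarrow> (\<exists>j. is_join mult A j)) \<and>
     (\<forall>A j s. finite A \<and> compatible_set mult A \<and> is_join mult A j \<longrightarrow>
         is_join mult ((\<lambda>a. mult s a) ` A) (mult s j) \<and>
         is_join mult ((\<lambda>a. mult a s) ` A) (mult j s)) \<and>
     idem_boolean_algebra mult z one"

definition is_cover :: "('a \<Rightarrow> 'a \<Rightarrow> 'a) \<Rightarrow> 'a \<Rightarrow> 'a set \<Rightarrow> 'a set \<Rightarrow> bool" where
  "is_cover mult z C W \<longleftrightarrow> C \<subseteq> W \<and> (\<forall>w\<in>W. w \<noteq> z \<longrightarrow> (\<exists>c\<in>C. mult c w \<noteq> z))"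

definition Jset :: "('a \<Rightarrow> 'a \<Rightarrow> 'a) \<Rightarrow> 'a \<Rightarrow> 'a set" where
  "Jset mult s = {e \<in> idem mult. mult s e = e}"

definition condH :: "('a \<Rightarrow> 'a \<Rightarrow> 'a) \<Rightarrow> 'a \<Rightarrow> bool" where
  "condH mult z \<longleftrightarrow> (\<forall>s. \<exists>C. finite C \<and> is_cover mult z C (Jset mult s))"

text \<open>e_s: the join of some finite cover of J_s (independent of the choice under (H)).\<close>
definition e_of :: "('a \<Rightarrow> 'a \<Rightarrow> 'a) \<Rightarrow> 'a \<Rightarrow> 'a \<Rightarrow> 'a" where
  "e_of mult z s = (SOME j. \<exists>C. finite C \<and> is_cover mult z C (Jset mult s) \<and> is_join mult C j)"

end

theory Submission
  imports Defs
begin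

text \<open>Conjugation \<open>g \<mapsto> s\<^sup>\<star> g s\<close> maps \<open>J\<^sub>s\<^sub>t\<close> into \<open>J\<^sub>t\<^sub>s\<close> and preserves the natural
  order, while \<open>e \<mapsto> s e s\<^sup>\<star>\<close> maps \<open>J\<^sub>t\<^sub>s\<close> back into \<open>J\<^sub>s\<^sub>t\<close> with \<open>s\<^sup>\<star> (s e s\<^sup>\<star>) s = e\<close>.
  So if \<open>f\<close> and \<open>e\<close> are the greatest elements of \<open>J\<^sub>s\<^sub>t\<close> and \<open>J\<^sub>t\<^sub>s\<close>, then
  \<open>s\<^sup>\<star> f s \<le> e \<le> s\<^sup>\<star> f s\<close>. This uses only the inverse semigroup axioms; the Boolean
  structure and (H) serve to show that \<open>e\<^sub>s\<close> is the greatest element of \<open>J\<^sub>s\<close>: it is fixed by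
  \<open>s\<close> because left multiplication by \<open>s\<close> fixes the cover and distributes over its join, and
  it dominates \<open>J\<^sub>s\<close> because the complement of \<open>e\<^sub>s\<close> is orthogonal to the cover.\<close>

locale inv_semigroup =
  fixes mult :: "'a \<Rightarrow> 'a \<Rightarrow> 'a" (infixl "\<cdot>" 70) and z :: 'a
  assumes inverse_semigroup: "inverse_semigroup mult z"
begin

abbreviation star :: "'a \<Rightarrow> 'a" ("_\<^sup>\<star>" [1000] 999) where
  "s\<^sup>\<star> \<equiv> istar mult s"

abbreviation E :: "'a set" where
  "E \<equiv> idem mult"

lemma assoc [simp]: "a \<cdot> b \<cdot> c = a \<cdot> (b \<cdot> c)"
  using inverse_semigroup unfolding inverse_semigroup_def by blast

lemma zero_mult [simp]: "z \<cdot> a = z" and mult_zero [simp]: "a \<cdot> z = z"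
  using inverse_semigroup unfolding inverse_semigroup_def by blast+

lemma mult_assoc_eq: "a \<cdot> b = c \<Longrightarrow> a \<cdot> (b \<cdot> x) = c \<cdot> x"
  by (simp only: assoc[symmetric])

lemma inverse_ex1: "\<exists>!t. s \<cdot> t \<cdot> s = s \<and> t \<cdot> s \<cdot> t = t"
  using inverse_semigroup unfolding inverse_semigroup_def by blast

lemma star_inverse: "s \<cdot> s\<^sup>\<star> \<cdot> s = s" "s\<^sup>\<star> \<cdot> s \<cdot> s\<^sup>\<star> = s\<^sup>\<star>"
  unfolding istar_def using theI'[OF inverse_ex1[of s]] by blast+

lemma mult_star_mult [simp]: "s \<cdot> (s\<^sup>\<star> \<cdot> s) = s" "s \<cdot> (s\<^sup>\<star> \<cdot> (s \<cdot> x)) = s \<cdot> x"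
  using star_inverse(1) mult_assoc_eq[of s "s\<^sup>\<star> \<cdot> s" s] by simp_all

lemma star_mult_star [simp]: "s\<^sup>\<star> \<cdot> (s \<cdot> s\<^sup>\<star>) = s\<^sup>\<star>" "s\<^sup>\<star> \<cdot> (s \<cdot> (s\<^sup>\<star> \<cdot> x)) = s\<^sup>\<star> \<cdot> x"
  using star_inverse(2) mult_assoc_eq[of "s\<^sup>\<star>" "s \<cdot> s\<^sup>\<star>" "s\<^sup>\<star>"] by simp_all

lemma star_unique: "s \<cdot> (t \<cdot> s) = s \<Longrightarrow> t \<cdot> (s \<cdot> t) = t \<Longrightarrow> s\<^sup>\<star> = t"
  using inverse_ex1[of s] star_inverse[of s] unfolding assoc by blast

lemma star_star [simp]: "(s\<^sup>\<star>)\<^sup>\<star> = s"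
  by (rule star_unique) simp_all

lemma idemD: "e \<in> E \<Longrightarrow> e \<cdot> e = e"
  and idemI: "e \<cdot> e = e \<Longrightarrow> e \<in> E"
  unfolding idem_def by simp_all

lemma idem_mult_idem: "e \<in> E \<Longrightarrow> e \<cdot> (e \<cdot> x) = e \<cdot> x"
  by (simp add: idemD mult_assoc_eq)

lemma star_idem: "e \<in> E \<Longrightarrow> e\<^sup>\<star> = e"
  by (rule star_unique) (simp_all add: idem_mult_idem idemD)

lemma zero_idem: "z \<in> E"
  by (rule idemI) simp

lemma star_mult_idem: "s\<^sup>\<star> \<cdot> s \<in> E" and mult_star_idem: "s \<cdot> s\<^sup>\<star> \<in> E"
  by (rule idemI, simp)+

text \<open>With \<open>a = e f\<close>, the element \<open>b = f a\<^sup>\<star> e\<close> is an idempotent inverse of \<open>a\<close>,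
  so \<open>a = b\<^sup>\<star> = b\<close>.\<close>
lemma idem_mult: assumes e: "e \<in> E" and f: "f \<in> E" shows "e \<cdot> f \<in> E"
proof -
  define a where "a = e \<cdot> f"
  define b where "b = f \<cdot> (a\<^sup>\<star> \<cdot> e)"
  have "a \<cdot> (b \<cdot> a) = e \<cdot> (f \<cdot> (a\<^sup>\<star> \<cdot> (e \<cdot> f)))"
    unfolding a_def b_def using e f by (simp add: idem_mult_idem)
  then have aba: "a \<cdot> (b \<cdot> a) = a"
    using mult_star_mult(1)[of "e \<cdot> f"] unfolding a_def by (simp only: assoc)
  have "a\<^sup>\<star> \<cdot> (e \<cdot> (f \<cdot> (a\<^sup>\<star> \<cdot> x))) = a\<^sup>\<star> \<cdot> x" for x
    using star_mult_star(2)[of a x] unfolding a_def by (simp only: assoc)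
  then have bb: "b \<cdot> b = b" and bab: "b \<cdot> (a \<cdot> b) = b"
    unfolding b_def using e f by (simp_all add: a_def idem_mult_idem)
  have "a = b\<^sup>\<star>"
    using star_unique[OF aba bab] by (metis star_star)
  then show ?thesis
    unfolding a_def using star_idem[OF idemI[OF bb]] bb idemI by simp
qed

lemma idem_commute: assumes e: "e \<in> E" and f: "f \<in> E" shows "e \<cdot> f = f \<cdot> e"
proof -
  have ef: "e \<cdot> f \<in> E" and fe: "f \<cdot> e \<in> E"
    using idem_mult e f by auto
  have "(e \<cdot> f) \<cdot> ((f \<cdot> e) \<cdot> (e \<cdot> f)) = e \<cdot> f" "(f \<cdot> e) \<cdot> ((e \<cdot> f) \<cdot> (f \<cdot> e)) = f \<cdot> e"
    using e f idemD[OF ef] idemD[OF fe] by (simp_all add: idem_mult_idem)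
  then have "(e \<cdot> f)\<^sup>\<star> = f \<cdot> e"
    by (rule star_unique)
  with star_idem[OF ef] show ?thesis
    by simp
qed

lemma idem_commute_left: "e \<in> E \<Longrightarrow> f \<in> E \<Longrightarrow> e \<cdot> (f \<cdot> x) = f \<cdot> (e \<cdot> x)"
  by (simp only: assoc[symmetric] idem_commute)

lemma star_mult: "(a \<cdot> b)\<^sup>\<star> = b\<^sup>\<star> \<cdot> a\<^sup>\<star>"
proof (rule star_unique)
  show "a \<cdot> b \<cdot> (b\<^sup>\<star> \<cdot> a\<^sup>\<star> \<cdot> (a \<cdot> b)) = a \<cdot> b"
    using idem_commute_left[OF mult_star_idem[of b] star_mult_idem[of a], of b] by simp
  show "b\<^sup>\<star> \<cdot> a\<^sup>\<star> \<cdot> (a \<cdot> b \<cdot> (b\<^sup>\<star> \<cdot> a\<^sup>\<star>)) = b\<^sup>\<star> \<cdot> a\<^sup>\<star>"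
    using idem_commute_left[OF mult_star_idem[of b] star_mult_idem[of a], of "a\<^sup>\<star>"] by simp
qed

lemma conj_idem: assumes e: "e \<in> E" shows "s\<^sup>\<star> \<cdot> (e \<cdot> s) \<in> E"
proof (rule idemI)
  have "s\<^sup>\<star> \<cdot> (e \<cdot> s) \<cdot> (s\<^sup>\<star> \<cdot> (e \<cdot> s)) = s\<^sup>\<star> \<cdot> (s \<cdot> s\<^sup>\<star> \<cdot> (e \<cdot> (e \<cdot> s)))"
    using idem_commute_left[OF e mult_star_idem[of s]] by simp
  then show "s\<^sup>\<star> \<cdot> (e \<cdot> s) \<cdot> (s\<^sup>\<star> \<cdot> (e \<cdot> s)) = s\<^sup>\<star> \<cdot> (e \<cdot> s)"
    by (simp add: idem_mult_idem[OF e])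
qed

lemma nleq_idem_iff: "g \<in> E \<Longrightarrow> nleq mult g f \<longleftrightarrow> g = f \<cdot> g"
  unfolding nleq_def by (simp add: star_idem idemD)

lemma nleq_idem_antisym:
  assumes "g \<in> E" "f \<in> E" "nleq mult g f" "nleq mult f g" shows "g = f"
  using assms nleq_idem_iff idem_commute by metis

lemma nleq_conj:
  assumes g: "g \<in> E" and f: "f \<in> E" and gf: "nleq mult g f"
  shows "nleq mult (s\<^sup>\<star> \<cdot> (g \<cdot> s)) (s\<^sup>\<star> \<cdot> (f \<cdot> s))"
proof -
  have "s\<^sup>\<star> \<cdot> (f \<cdot> s) \<cdot> (s\<^sup>\<star> \<cdot> (g \<cdot> s)) = s\<^sup>\<star> \<cdot> (s \<cdot> s\<^sup>\<star> \<cdot> (f \<cdot> (g \<cdot> s)))"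
    using idem_commute_left[OF f mult_star_idem[of s]] by simp
  also have "\<dots> = s\<^sup>\<star> \<cdot> (g \<cdot> s)"
    using mult_assoc_eq[OF gf[unfolded nleq_idem_iff[OF g], symmetric]] by simp
  finally show ?thesis
    using nleq_idem_iff[OF conj_idem[OF g]] by simp
qed

lemma Jset_iff: "g \<in> Jset mult s \<longleftrightarrow> g \<in> E \<and> s \<cdot> g = g"
  unfolding Jset_def by simp

lemma star_mult_fixed:
  assumes e: "e \<in> E" and ae: "a \<cdot> e = e" shows "a\<^sup>\<star> \<cdot> (a \<cdot> e) = e"
proof -
  have "e = (a \<cdot> e)\<^sup>\<star>"
    using ae star_idem[OF e] by simp
  then have e_star: "e = e \<cdot> a\<^sup>\<star>"
    using star_idem[OF e] by (simp add: star_mult)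
  have "e = e \<cdot> a\<^sup>\<star> \<cdot> (a \<cdot> e)"
    using idemD[OF e] ae e_star by simp
  also have "\<dots> = a\<^sup>\<star> \<cdot> a \<cdot> (e \<cdot> e)"
    using idem_commute_left[OF e star_mult_idem[of a]] by simp
  finally show ?thesis
    using idemD[OF e] by simp
qed

text \<open>For \<open>g \<in> J\<^sub>s\<^sub>t\<close>, the conjugate \<open>s\<^sup>\<star> g s\<close> equals the idempotent \<open>t g s\<close>,
  which is fixed by \<open>t s\<close> because \<open>s t g = g\<close>.\<close>
lemma conj_Jset:
  assumes g: "g \<in> Jset mult (s \<cdot> t)" shows "s\<^sup>\<star> \<cdot> (g \<cdot> s) \<in> Jset mult (t \<cdot> s)"
proof -
  have gE: "g \<in> E" and stg: "s \<cdot> (t \<cdot> g) = g"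
    using g by (simp_all add: Jset_iff)
  define w where "w = t \<cdot> (g \<cdot> s)"
  have "w \<cdot> w = t \<cdot> (g \<cdot> (s \<cdot> (t \<cdot> g)) \<cdot> s)"
    unfolding w_def by simp
  then have wE: "w \<in> E"
    using idemI stg idem_mult_idem[OF gE] unfolding w_def by simp
  have "s\<^sup>\<star> \<cdot> (g \<cdot> s) = s\<^sup>\<star> \<cdot> s \<cdot> w"
    unfolding w_def by (subst (1) stg[symmetric]) simp
  also have "\<dots> = w \<cdot> (s\<^sup>\<star> \<cdot> s)"
    using idem_commute[OF star_mult_idem wE] .
  also have "\<dots> = w"
    unfolding w_def by simp
  finally have conj_eq: "s\<^sup>\<star> \<cdot> (g \<cdot> s) = w" .
  have "t \<cdot> s \<cdot> w = w"
    unfolding w_def using mult_assoc_eq[OF stg] by simp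
  then show ?thesis
    using conj_eq wE by (simp add: Jset_iff)
qed

lemma star_conj_Jset:
  assumes e: "e \<in> Jset mult (t \<cdot> s)"
  shows "s \<cdot> (e \<cdot> s\<^sup>\<star>) \<in> Jset mult (s \<cdot> t)" and "s\<^sup>\<star> \<cdot> (s \<cdot> (e \<cdot> s\<^sup>\<star>) \<cdot> s) = e"
proof -
  have eE: "e \<in> E" and tse: "t \<cdot> (s \<cdot> e) = e"
    using e by (simp_all add: Jset_iff)
  have ts_domain: "s\<^sup>\<star> \<cdot> (t\<^sup>\<star> \<cdot> (t \<cdot> (s \<cdot> e))) = e"
    using star_mult_fixed[OF eE, of "t \<cdot> s"] tse by (simp add: star_mult)
  have "s\<^sup>\<star> \<cdot> (s \<cdot> e) = s\<^sup>\<star> \<cdot> (s \<cdot> (s\<^sup>\<star> \<cdot> (t\<^sup>\<star> \<cdot> (t \<cdot> (s \<cdot> e)))))"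
    by (simp only: ts_domain)
  also have "\<dots> = e"
    by (subst star_mult_star(2)) (rule ts_domain)
  finally have Qe: "s\<^sup>\<star> \<cdot> (s \<cdot> e) = e" .
  have eQ: "e \<cdot> (s\<^sup>\<star> \<cdot> s) = e"
    using Qe idem_commute[OF eE star_mult_idem] by simp
  have "s \<cdot> (e \<cdot> s\<^sup>\<star>) = (s\<^sup>\<star>)\<^sup>\<star> \<cdot> (e \<cdot> s\<^sup>\<star>)"
    by simp
  then have yE: "s \<cdot> (e \<cdot> s\<^sup>\<star>) \<in> E"
    using conj_idem[OF eE, of "s\<^sup>\<star>"] by simp
  have "s \<cdot> t \<cdot> (s \<cdot> (e \<cdot> s\<^sup>\<star>)) = s \<cdot> (e \<cdot> s\<^sup>\<star>)"
    using mult_assoc_eq[OF tse] by simp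
  with yE show "s \<cdot> (e \<cdot> s\<^sup>\<star>) \<in> Jset mult (s \<cdot> t)"
    by (simp add: Jset_iff)
  show "s\<^sup>\<star> \<cdot> (s \<cdot> (e \<cdot> s\<^sup>\<star>) \<cdot> s) = e"
    using mult_assoc_eq[OF Qe] Qe eQ by simp
qed

definition greatest_Jset :: "'a \<Rightarrow> 'a \<Rightarrow> bool" where
  "greatest_Jset s e \<longleftrightarrow> e \<in> Jset mult s \<and> (\<forall>g \<in> Jset mult s. nleq mult g e)"

theorem conj_greatest_Jset:
  assumes f: "greatest_Jset (s \<cdot> t) f" and e: "greatest_Jset (t \<cdot> s) e"
  shows "s\<^sup>\<star> \<cdot> (f \<cdot> s) = e"
proof (rule nleq_idem_antisym)
  have fJ: "f \<in> Jset mult (s \<cdot> t)" and eJ: "e \<in> Jset mult (t \<cdot> s)"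
    using f e unfolding greatest_Jset_def by simp_all
  then have fE: "f \<in> E" and eE: "e \<in> E"
    by (simp_all add: Jset_iff)
  show "s\<^sup>\<star> \<cdot> (f \<cdot> s) \<in> E" and "e \<in> E"
    using conj_idem[OF fE] eE .
  show "nleq mult (s\<^sup>\<star> \<cdot> (f \<cdot> s)) e"
    using e conj_Jset[OF fJ] unfolding greatest_Jset_def by blast
  have "nleq mult (s \<cdot> (e \<cdot> s\<^sup>\<star>)) f"
    using f star_conj_Jset(1)[OF eJ] unfolding greatest_Jset_def by blast
  then show "nleq mult e (s\<^sup>\<star> \<cdot> (f \<cdot> s))"
    using nleq_conj[OF _ fE, of "s \<cdot> (e \<cdot> s\<^sup>\<star>)" s] star_conj_Jset[OF eJ]
    by (simp add: Jset_iff)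
qed

end

locale boolean_inv_monoid =
  fixes mult :: "'a \<Rightarrow> 'a \<Rightarrow> 'a" (infixl "\<cdot>" 70) and z one :: 'a
  assumes boolean_inverse_monoid: "boolean_inverse_monoid mult z one"

sublocale boolean_inv_monoid \<subseteq> inv_semigroup
  using boolean_inverse_monoid unfolding boolean_inverse_monoid_def by unfold_locales blast

context boolean_inv_monoid
begin

lemma one_mult [simp]: "one \<cdot> s = s" and mult_one [simp]: "s \<cdot> one = s"
  using boolean_inverse_monoid unfolding boolean_inverse_monoid_def by blast+

lemma one_idem: "one \<in> E"
  by (rule idemI) simp

lemma join_exists: "finite A \<Longrightarrow> compatible_set mult A \<Longrightarrow> \<exists>j. is_join mult A j"
  using boolean_inverse_monoid unfolding boolean_inverse_monoid_def by blast

lemma join_mult_left: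
  "finite A \<Longrightarrow> compatible_set mult A \<Longrightarrow> is_join mult A j \<Longrightarrow> is_join mult ((\<cdot>) s ` A) (s \<cdot> j)"
  using boolean_inverse_monoid unfolding boolean_inverse_monoid_def by blast

lemma compatible_set_idem: "A \<subseteq> E \<Longrightarrow> compatible_set mult A"
  unfolding compatible_set_def using star_idem idem_mult by (simp add: subset_iff)

lemma idem_if_nleq_one: "nleq mult j one \<Longrightarrow> j \<in> E"
  unfolding nleq_def using star_mult_idem[of j] by simp

definition idem_join :: "'a \<Rightarrow> 'a \<Rightarrow> 'a" where
  "idem_join e f = (THE j. is_join_in mult E {e, f} j)"

definition idem_meet :: "'a \<Rightarrow> 'a \<Rightarrow> 'a" where
  "idem_meet e f = (THE m. m \<in> E \<and> nleq mult m e \<and> nleq mult m f \<and>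
     (\<forall>u\<in>E. nleq mult u e \<and> nleq mult u f \<longrightarrow> nleq mult u m))"

lemma idem_meet_join_distrib:
  "e \<in> E \<Longrightarrow> f \<in> E \<Longrightarrow> g \<in> E \<Longrightarrow>
    idem_meet e (idem_join f g) = idem_join (idem_meet e f) (idem_meet e g)"
  and idem_complement_exists: "e \<in> E \<Longrightarrow> \<exists>f\<in>E. idem_meet e f = z \<and> idem_join e f = one"
  using boolean_inverse_monoid
  unfolding boolean_inverse_monoid_def idem_boolean_algebra_def Let_def idem_meet_def idem_join_def
  by blast+

lemma idem_meet_eq_mult: assumes e: "e \<in> E" and f: "f \<in> E" shows "idem_meet e f = e \<cdot> f"
  unfolding idem_meet_def
proof (rule the_equality)
  have ef: "e \<cdot> f \<in> E"
    using idem_mult[OF e f] .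
  have le_e: "nleq mult (e \<cdot> f) e"
    using nleq_idem_iff[OF ef] idem_mult_idem[OF e] by simp
  have le_f: "nleq mult (e \<cdot> f) f"
    using nleq_idem_iff[OF ef] idem_commute[OF e f] idem_mult_idem[OF f] by metis
  have greatest: "nleq mult u (e \<cdot> f)" if "u \<in> E" "nleq mult u e" "nleq mult u f" for u
  proof -
    have "u = e \<cdot> u" "u = f \<cdot> u"
      using that nleq_idem_iff by blast+
    then have "u = e \<cdot> f \<cdot> u"
      by (simp only: assoc)
    then show ?thesis
      using nleq_idem_iff[OF \<open>u \<in> E\<close>] by blast
  qed
  show "e \<cdot> f \<in> E \<and> nleq mult (e \<cdot> f) e \<and> nleq mult (e \<cdot> f) f \<and>
      (\<forall>u\<in>E. nleq mult u e \<and> nleq mult u f \<longrightarrow> nleq mult u (e \<cdot> f))"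
    using ef le_e le_f greatest by blast
  fix m assume "m \<in> E \<and> nleq mult m e \<and> nleq mult m f \<and>
      (\<forall>u\<in>E. nleq mult u e \<and> nleq mult u f \<longrightarrow> nleq mult u m)"
  with ef le_e le_f greatest show "m = e \<cdot> f"
    by (meson nleq_idem_antisym)
qed

lemma idem_join_zero: assumes e: "e \<in> E" shows "idem_join e z = e"
  unfolding idem_join_def
proof (rule the_equality)
  show "is_join_in mult E {e, z} e"
    unfolding is_join_in_def using e nleq_idem_iff[OF e] nleq_idem_iff[OF zero_idem] idemD[OF e]
    by simp
  show "j = e" if "is_join_in mult E {e, z} j" for j
    using that \<open>is_join_in mult E {e, z} e\<close> unfolding is_join_in_def by (meson nleq_idem_antisym)
qed

text \<open>The complement \<open>f\<close> of \<open>j\<close> detects the order: \<open>e \<le> j\<close> iff \<open>e f = 0\<close>,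
  because \<open>e = e (j \<or> f) = e j \<or> e f\<close>.\<close>
lemma idem_complement:
  assumes j: "j \<in> E" shows "\<exists>f\<in>E. j \<cdot> f = z \<and> (\<forall>e\<in>E. e \<cdot> f = z \<longrightarrow> e = j \<cdot> e)"
proof -
  obtain f where f: "f \<in> E" and meet: "idem_meet j f = z" and join: "idem_join j f = one"
    using idem_complement_exists[OF j] by blast
  have "e = j \<cdot> e" if e: "e \<in> E" and ef: "e \<cdot> f = z" for e
  proof -
    have "e = idem_meet e (idem_join j f)"
      using join idem_meet_eq_mult[OF e one_idem] by simp
    also have "\<dots> = e \<cdot> j"
      using idem_meet_join_distrib[OF e j f] idem_meet_eq_mult e j f ef
        idem_join_zero[OF idem_mult[OF e j]] by simp
    finally show ?thesis
      using idem_commute[OF e j] by simp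
  qed
  with f meet idem_meet_eq_mult[OF j f] show ?thesis
    by auto
qed

lemma join_idem: assumes A: "A \<subseteq> E" and jn: "is_join mult A j" shows "j \<in> E"
proof -
  have "\<forall>a\<in>A. nleq mult a one"
    using A nleq_idem_iff by auto
  then have "nleq mult j one"
    using jn unfolding is_join_in_def by blast
  then show ?thesis
    by (rule idem_if_nleq_one)
qed

lemma join_Jset_fixed:
  assumes fin: "finite C" and C: "C \<subseteq> Jset mult s" and jn: "is_join mult C j"
  shows "s \<cdot> j = j"
proof -
  have CE: "C \<subseteq> E" and "(\<cdot>) s ` C = C"
    using C unfolding Jset_def by force+
  then have "is_join mult C (s \<cdot> j)"
    using join_mult_left[OF fin compatible_set_idem[OF CE] jn, of s] by simp
  then have "nleq mult j (s \<cdot> j)"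
    using jn unfolding is_join_in_def by blast
  then have "j = s \<cdot> j \<cdot> j"
    using nleq_idem_iff[OF join_idem[OF CE jn]] by blast
  then show "s \<cdot> j = j"
    unfolding assoc idemD[OF join_idem[OF CE jn]] by (rule sym)
qed

text \<open>An element of \<open>J\<^sub>s\<close> is disjoint from the complement of \<open>j\<close>, since otherwise the cover
  \<open>C\<close> would meet their nonzero product, which again lies in \<open>J\<^sub>s\<close>.\<close>
lemma Jset_below_join_cover:
  assumes cov: "is_cover mult z C (Jset mult s)" and jn: "is_join mult C j"
    and e: "e \<in> Jset mult s"
  shows "nleq mult e j"
proof -
  have CE: "C \<subseteq> E"
    using cov unfolding is_cover_def Jset_def by blast
  have jE: "j \<in> E"
    using join_idem[OF CE jn] .
  have eE: "e \<in> E" and se: "s \<cdot> e = e"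
    using e by (simp_all add: Jset_iff)
  obtain f where fE: "f \<in> E" and jf: "j \<cdot> f = z" and below_j: "\<forall>e\<in>E. e \<cdot> f = z \<longrightarrow> e = j \<cdot> e"
    using idem_complement[OF jE] by blast
  have "e \<cdot> f = z"
  proof (rule ccontr)
    assume nz: "e \<cdot> f \<noteq> z"
    have "e \<cdot> f \<in> Jset mult s"
      using idem_mult[OF eE fE] mult_assoc_eq[OF se] by (simp add: Jset_iff)
    then obtain c where cC: "c \<in> C" and cef: "c \<cdot> (e \<cdot> f) \<noteq> z"
      using cov nz unfolding is_cover_def by blast
    have cE: "c \<in> E"
      using CE cC by blast
    have "c = j \<cdot> c"
      using jn cC nleq_idem_iff[OF cE] unfolding is_join_in_def by blast
    then have "c \<cdot> (e \<cdot> f) = j \<cdot> (c \<cdot> (e \<cdot> f))"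
      using mult_assoc_eq by metis
    also have "\<dots> = c \<cdot> (e \<cdot> (j \<cdot> f))"
      using idem_commute_left[OF jE cE] idem_commute_left[OF jE eE] by simp
    finally show False
      using cef jf by simp
  qed
  then show ?thesis
    using below_j eE nleq_idem_iff[OF eE] by blast
qed

lemma join_cover_greatest_Jset:
  assumes "finite C" and cov: "is_cover mult z C (Jset mult s)" and jn: "is_join mult C j"
  shows "greatest_Jset s j"
proof -
  have C: "C \<subseteq> Jset mult s"
    using cov unfolding is_cover_def by blast
  then have "j \<in> E"
    using join_idem[OF _ jn] unfolding Jset_def by blast
  with join_Jset_fixed[OF assms(1) C jn] Jset_below_join_cover[OF cov jn] show ?thesis
    unfolding greatest_Jset_def by (simp add: Jset_iff)
qed

lemma e_of_greatest_Jset: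
  assumes H: "condH mult z" shows "greatest_Jset s (e_of mult z s)"
proof -
  obtain C where fin: "finite C" and cov: "is_cover mult z C (Jset mult s)"
    using H unfolding condH_def by blast
  have "C \<subseteq> E"
    using cov unfolding is_cover_def Jset_def by blast
  then obtain j where "is_join mult C j"
    using join_exists[OF fin compatible_set_idem] by blast
  with fin cov have "\<exists>j. \<exists>C. finite C \<and> is_cover mult z C (Jset mult s) \<and> is_join mult C j"
    by blast
  then have "\<exists>C. finite C \<and> is_cover mult z C (Jset mult s) \<and> is_join mult C (e_of mult z s)"
    unfolding e_of_def by (rule someI_ex)
  then show ?thesis
    using join_cover_greatest_Jset by blast
qed

end

theorem mainTheorem6:
  fixes mult :: "'a \<Rightarrow> 'a \<Rightarrow> 'a" and z one :: 'a
  assumes "countable (UNIV :: 'a set)"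
    and "boolean_inverse_monoid mult z one"
    and "condH mult z"
  shows "\<forall>s t. mult (mult (istar mult s) (e_of mult z (mult s t))) s = e_of mult z (mult t s)"
proof (intro allI)
  fix s t
  interpret boolean_inv_monoid mult z one
    by (rule boolean_inv_monoid.intro) (rule assms(2))
  have "mult (istar mult s) (mult (e_of mult z (mult s t)) s) = e_of mult z (mult t s)"
    using conj_greatest_Jset e_of_greatest_Jset[OF assms(3)] by blast
  then show "mult (mult (istar mult s) (e_of mult z (mult s t))) s = e_of mult z (mult t s)"
    by simp
qed

end
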